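(* Let $n\ge1$, let $\preceq$ be an admissible order on $L([0,1])$ and let $F\colon L([0,1])^2\to L([0,1])$, $G\colon L([0,1])^n\to L([0,1])$. The interval-valued Sugeno-like $FG$-functional $\mathbf S_m^{F,G}$ is idempotent (i.e. $\mathbf S_m^{F,G}(X,\dots,X)=X$ for all $X\in L([0,1])$) for every IV fuzzy measure $m$ w.r.t. $\preceq$ whenever: (i) $F(X,\mathbf 1)=X$ for all $X\in L([0,1])$ and $G=\mathrm{Proj}_1$; or (ii) $F(X,\mathbf 1)=X$ for all $X\in L([0,1])$, $F$ is non-decreasing in the second variable and $G=\vee$; or (iii) $G$ is idempotent and $F(X,Y)=X$ for all $X,Y\in L([0,1])$.
   Context: $N=\{1,\dots,n\}$. $L([0,1])=\{[a,b]:0\le a\le b\le1\}$, $\mathbf0=[0,0]$, $\mathbf1=[1,1]$. An admissible order $\preceq$ is a total order on $L([0,1])$ such that $[a,b]\preceq[c,d]$ whenever $a\le c$ and $b\le d$. $\vee$ denotes the maximum w.r.t. $\preceq$; monotonicity is w.r.t. $\preceq$; $\mathrm{Proj}_1(X_1,\dots,X_n)=X_1$; $G$ idempotent means $G(X,\dots,X)=X$. An IV fuzzy measure w.r.t. $\preceq$ is $m\colon 2^N\to L([0,1])$ with $m(\emptyset)=\mathbf0$, $m(N)=\mathbf1$, $m(A)\preceq m(B)$ for $A\subseteq B$. For a permutation $\sigma$ of $N$, $E_{\sigma(i)}=\{\sigma(i),\dots,\sigma(n)\}$. The IV Sugeno-like $FG$-functional w.r.t. $m$ is $\mathbf S_m^{F,G}(X_1,\dots,X_n)=G\big(F(X_{\sigma(1)},m(E_{\sigma(1)})),\dots,F(X_{\sigma(n)},m(E_{\sigma(n)}))\big)$,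 where $\sigma$ is any permutation with $X_{\sigma(1)}\preceq\dots\preceq X_{\sigma(n)}$; it is defined when (Condition (WDS)) this value does not depend on the choice of such $\sigma$, for all inputs. *)

theory Defs
  imports Complex_Main "HOL-Combinatorics.Permutations"
begin

text \<open>Intervals [a,b] in [0,1] are represented as pairs (a,b) with 0 \<le> a \<le> b \<le> 1.\<close>
type_synonym ival = "real \<times> real"

definition LI :: "ival set" where
  "LI = {(a, b). 0 \<le> a \<and> a \<le> b \<and> b \<le> 1}"

definition izero :: ival where "izero = (0, 0)"
definition ione :: ival where "ione = (1, 1)"

definition admissible_order :: "(ival \<Rightarrow> ival \<Rightarrow> bool) \<Rightarrow> bool" where
  "admissible_order le \<longleftrightarrow>
     (\<forall>x\<in>LI. le x x) \<and>
     (\<forall>x\<in>LI. \<forall>y\<in>LI. le x y \<and> le y x \<longrightarrow> x = y) \<and>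
     (\<forall>x\<in>LI. \<forall>y\<in>LI. \<forall>z\<in>LI. le x y \<and> le y z \<longrightarrow> le x z) \<and>
     (\<forall>x\<in>LI. \<forall>y\<in>LI. le x y \<or> le y x) \<and>
     (\<forall>a b c d. (a, b) \<in> LI \<and> (c, d) \<in> LI \<and> a \<le> c \<and> b \<le> d \<longrightarrow> le (a, b) (c, d))"

definition iv_fuzzy_measure :: "(ival \<Rightarrow> ival \<Rightarrow> bool) \<Rightarrow> nat \<Rightarrow> (nat set \<Rightarrow> ival) \<Rightarrow> bool" where
  "iv_fuzzy_measure le n m \<longleftrightarrow>
     (\<forall>A. A \<subseteq> {1..n} \<longrightarrow> m A \<in> LI) \<and>
     m {} = izero \<and> m {1..n} = ione \<and>
     (\<forall>A B. A \<subseteq> B \<and> B \<subseteq> {1..n} \<longrightarrow> le (m A) (m B))"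

definition lmax :: "(ival \<Rightarrow> ival \<Rightarrow> bool) \<Rightarrow> ival list \<Rightarrow> ival" where
  "lmax le xs = (THE y. y \<in> set xs \<and> (\<forall>z\<in>set xs. le z y))"

definition sorting_perm :: "(ival \<Rightarrow> ival \<Rightarrow> bool) \<Rightarrow> nat \<Rightarrow> (nat \<Rightarrow> ival) \<Rightarrow> (nat \<Rightarrow> nat) \<Rightarrow> bool" where
  "sorting_perm le n X \<sigma> \<longleftrightarrow> \<sigma> permutes {1..n} \<and>
     (\<forall>i\<in>{1..n}. \<forall>j\<in>{1..n}. i \<le> j \<longrightarrow> le (X (\<sigma> i)) (X (\<sigma> j)))"

definition sugeno_val ::
  "nat \<Rightarrow> (nat set \<Rightarrow> ival) \<Rightarrow> (ival \<Rightarrow> ival \<Rightarrow> ival) \<Rightarrow> (ival list \<Rightarrow> ival)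
    \<Rightarrow> (nat \<Rightarrow> ival) \<Rightarrow> (nat \<Rightarrow> nat) \<Rightarrow> ival" where
  "sugeno_val n m F G X \<sigma> = G (map (\<lambda>i. F (X (\<sigma> i)) (m (\<sigma> ` {i..n}))) [1..<n+1])"

definition sugeno ::
  "(ival \<Rightarrow> ival \<Rightarrow> bool) \<Rightarrow> nat \<Rightarrow> (nat set \<Rightarrow> ival) \<Rightarrow> (ival \<Rightarrow> ival \<Rightarrow> ival)
    \<Rightarrow> (ival list \<Rightarrow> ival) \<Rightarrow> (nat \<Rightarrow> ival) \<Rightarrow> ival" where
  "sugeno le n m F G X = sugeno_val n m F G X (SOME \<sigma>. sorting_perm le n X \<sigma>)"

end

theory Submission
  imports Defs
begin

text \<open>On a constant input X every permutation of N sorts the input, and the first set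
  E_\<sigma>(1) is N itself, so the first argument of G is F(X, m(N)) = F(X, 1).
  Under (i) the projection returns this value, which is X. Under (ii) every other argument
  F(X, m(E)) lies below F(X, 1) = X because m(E) \<preceq> 1, so the maximum is X. Under (iii)
  all arguments equal X and G is idempotent.\<close>

definition tail_sets :: "(nat \<Rightarrow> nat) \<Rightarrow> nat \<Rightarrow> nat set list" where
  "tail_sets \<sigma> n = map (\<lambda>i. \<sigma> ` {i..n}) [1..<n+1]"

lemma length_tail_sets [simp]: "length (tail_sets \<sigma> n) = n"
  by (simp add: tail_sets_def)

lemma tail_sets_subset:
  assumes "\<sigma> permutes {1..n}" and "E \<in> set (tail_sets \<sigma> n)"
  shows "E \<subseteq> {1..n}"
proof -
  from assms(2) obtain i where "1 \<le> i" and "E = \<sigma> ` {i..n}"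
    by (auto simp: tail_sets_def)
  then have "E \<subseteq> \<sigma> ` {1..n}" by auto
  then show ?thesis using permutes_image[OF assms(1)] by simp
qed

lemma hd_tail_sets:
  assumes "\<sigma> permutes {1..n}" and "1 \<le> n"
  shows "hd (tail_sets \<sigma> n) = {1..n}"
proof -
  have "[1..<n+1] = 1 # [Suc 1..<n+1]" using assms(2) by (simp add: upt_conv_Cons)
  then show ?thesis using permutes_image[OF assms(1)] by (simp add: tail_sets_def)
qed

lemma sugeno_val_const:
  "sugeno_val n m F G (\<lambda>_. X) \<sigma> = G (map (\<lambda>E. F X (m E)) (tail_sets \<sigma> n))"
  by (simp add: sugeno_val_def tail_sets_def comp_def)

lemma sorting_perm_const_iff:
  assumes "le X X"
  shows "sorting_perm le n (\<lambda>_. X) \<sigma> \<longleftrightarrow> \<sigma> permutes {1..n}"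
  using assms by (simp add: sorting_perm_def)

lemma sugeno_eqI:
  assumes "\<And>\<sigma>. sorting_perm le n X \<sigma> \<Longrightarrow> sugeno_val n m F G X \<sigma> = v"
    and "sorting_perm le n X \<sigma>\<^sub>0"
  shows "sugeno le n m F G X = v"
proof -
  have "sorting_perm le n X (SOME \<sigma>. sorting_perm le n X \<sigma>)"
    using assms(2) by (rule someI[where x = \<sigma>\<^sub>0])
  then show ?thesis unfolding sugeno_def by (rule assms(1))
qed

lemma iv_fuzzy_measure_in_LI:
  "iv_fuzzy_measure le n m \<Longrightarrow> A \<subseteq> {1..n} \<Longrightarrow> m A \<in> LI"
  by (simp add: iv_fuzzy_measure_def)

lemma iv_fuzzy_measure_le_ione:
  assumes "iv_fuzzy_measure le n m" and "A \<subseteq> {1..n}"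
  shows "le (m A) ione"
proof -
  from assms(1) have mono: "\<forall>A B. A \<subseteq> B \<and> B \<subseteq> {1..n} \<longrightarrow> le (m A) (m B)"
    and top: "m {1..n} = ione"
    by (simp_all add: iv_fuzzy_measure_def)
  have "le (m A) (m {1..n})" using mono assms(2) by blast
  then show ?thesis using top by simp
qed

lemma lmax_eqI:
  assumes "x \<in> set xs" and "\<forall>z\<in>set xs. le z x"
    and "\<forall>y\<in>set xs. \<forall>z\<in>set xs. le y z \<and> le z y \<longrightarrow> y = z"
  shows "lmax le xs = x"
  unfolding lmax_def using assms by (intro the_equality) blast+

lemma const_sugeno_args_in_LI:
  assumes "iv_fuzzy_measure le n m" and "\<sigma> permutes {1..n}"
    and "\<forall>Y\<in>LI. F X Y \<in> LI"
  shows "set (map (\<lambda>E. F X (m E)) (tail_sets \<sigma> n)) \<subseteq> LI"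
  using assms tail_sets_subset iv_fuzzy_measure_in_LI by fastforce

lemma hd_const_sugeno_args:
  assumes "iv_fuzzy_measure le n m" and "\<sigma> permutes {1..n}" and "1 \<le> n"
    and "F X ione = X"
  shows "hd (map (\<lambda>E. F X (m E)) (tail_sets \<sigma> n)) = X"
proof -
  have "tail_sets \<sigma> n \<noteq> []" using assms(3) by (auto simp: tail_sets_def)
  then show ?thesis
    using assms by (simp add: hd_map hd_tail_sets iv_fuzzy_measure_def)
qed

lemma sugeno_val_const_proj:
  assumes "iv_fuzzy_measure le n m" and "\<sigma> permutes {1..n}" and "1 \<le> n"
    and "\<forall>Y\<in>LI. F X Y \<in> LI" and "F X ione = X"
    and "\<forall>xs. length xs = n \<and> set xs \<subseteq> LI \<longrightarrow> G xs = hd xs"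
  shows "sugeno_val n m F G (\<lambda>_. X) \<sigma> = X"
proof -
  have "set (map (\<lambda>E. F X (m E)) (tail_sets \<sigma> n)) \<subseteq> LI"
    using assms(1,2,4) by (rule const_sugeno_args_in_LI)
  moreover have "hd (map (\<lambda>E. F X (m E)) (tail_sets \<sigma> n)) = X"
    using assms(1,2,3,5) by (rule hd_const_sugeno_args)
  ultimately show ?thesis using assms(6) by (simp add: sugeno_val_const)
qed

lemma sugeno_val_const_max:
  assumes m: "iv_fuzzy_measure le n m" and \<sigma>: "\<sigma> permutes {1..n}" and "1 \<le> n"
    and antisym: "\<forall>x\<in>LI. \<forall>y\<in>LI. le x y \<and> le y x \<longrightarrow> x = y"
    and F_range: "\<forall>Y\<in>LI. F X Y \<in> LI" and F_one: "F X ione = X"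
    and F_mono: "\<forall>Y\<in>LI. \<forall>Z\<in>LI. le Y Z \<longrightarrow> le (F X Y) (F X Z)"
    and G_max: "\<forall>xs. length xs = n \<and> set xs \<subseteq> LI \<longrightarrow> G xs = lmax le xs"
  shows "sugeno_val n m F G (\<lambda>_. X) \<sigma> = X"
proof -
  define xs where "xs = map (\<lambda>E. F X (m E)) (tail_sets \<sigma> n)"
  have xs_LI: "set xs \<subseteq> LI"
    unfolding xs_def using m \<sigma> F_range by (rule const_sugeno_args_in_LI)
  have "hd xs = X"
    unfolding xs_def using m \<sigma> \<open>1 \<le> n\<close> F_one by (rule hd_const_sugeno_args)
  moreover have "xs \<noteq> []" using \<open>1 \<le> n\<close> by (auto simp: xs_def tail_sets_def)
  ultimately have X_in: "X \<in> set xs" using list.set_sel(1) by fastforce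
  have "le z X" if "z \<in> set xs" for z
  proof -
    from that obtain E where E: "E \<in> set (tail_sets \<sigma> n)" and z: "z = F X (m E)"
      by (auto simp: xs_def)
    have "E \<subseteq> {1..n}" using \<sigma> E by (rule tail_sets_subset)
    then have "le (m E) ione" and "m E \<in> LI"
      using m iv_fuzzy_measure_le_ione iv_fuzzy_measure_in_LI by blast+
    moreover have "ione \<in> LI" by (simp add: ione_def LI_def)
    ultimately show ?thesis using F_mono F_one z by metis
  qed
  then have "lmax le xs = X"
    using X_in antisym xs_LI by (intro lmax_eqI) blast+
  then show ?thesis
    using G_max xs_LI by (simp add: sugeno_val_const xs_def)
qed

lemma sugeno_val_const_idem:
  assumes "iv_fuzzy_measure le n m" and "\<sigma> permutes {1..n}"
    and "\<forall>Y\<in>LI. F X Y = X" and "G (replicate n X) = X"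
  shows "sugeno_val n m F G (\<lambda>_. X) \<sigma> = X"
proof -
  have "map (\<lambda>E. F X (m E)) (tail_sets \<sigma> n) = map (\<lambda>_. X) (tail_sets \<sigma> n)"
    using assms tail_sets_subset iv_fuzzy_measure_in_LI by (intro map_cong) auto
  then show ?thesis
    using assms(4) by (simp add: sugeno_val_const map_replicate_const)
qed

theorem proposition3:
  fixes le :: "ival \<Rightarrow> ival \<Rightarrow> bool"
    and n :: nat
    and F :: "ival \<Rightarrow> ival \<Rightarrow> ival"
    and G :: "ival list \<Rightarrow> ival"
  assumes n: "n \<ge> 1"
    and adm: "admissible_order le"
    and F_range: "\<forall>X\<in>LI. \<forall>Y\<in>LI. F X Y \<in> LI"
    and G_range: "\<forall>xs. length xs = n \<and> set xs \<subseteq> LI \<longrightarrow> G xs \<in> LI"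
    and cases:
      "((\<forall>X\<in>LI. F X ione = X) \<and>
          (\<forall>xs. length xs = n \<and> set xs \<subseteq> LI \<longrightarrow> G xs = hd xs))
       \<or> ((\<forall>X\<in>LI. F X ione = X) \<and>
          (\<forall>X\<in>LI. \<forall>Y\<in>LI. \<forall>Z\<in>LI. le Y Z \<longrightarrow> le (F X Y) (F X Z)) \<and>
          (\<forall>xs. length xs = n \<and> set xs \<subseteq> LI \<longrightarrow> G xs = lmax le xs))
       \<or> ((\<forall>X\<in>LI. G (replicate n X) = X) \<and>
          (\<forall>X\<in>LI. \<forall>Y\<in>LI. F X Y = X))"
  shows "\<forall>m. iv_fuzzy_measure le n m \<longrightarrow>
           (\<forall>X\<in>LI. sugeno le n m F G (\<lambda>_. X) = X \<and>
              (\<forall>\<sigma>. sorting_perm le n (\<lambda>_. X) \<sigma> \<longrightarrow> sugeno_val n m F G (\<lambda>_. X) \<sigma> = X))"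
proof (intro allI impI ballI)
  fix m X assume m: "iv_fuzzy_measure le n m" and X: "X \<in> LI"
  have refl: "le X X"
    using adm X unfolding admissible_order_def by (elim conjE) blast
  have antisym: "\<forall>x\<in>LI. \<forall>y\<in>LI. le x y \<and> le y x \<longrightarrow> x = y"
    using adm unfolding admissible_order_def by (elim conjE) assumption
  have F_X_range: "\<forall>Y\<in>LI. F X Y \<in> LI" using F_range X by blast
  have val: "sugeno_val n m F G (\<lambda>_. X) \<sigma> = X" if \<sigma>: "\<sigma> permutes {1..n}" for \<sigma>
    using cases
  proof (elim disjE conjE)
    assume F_one: "\<forall>X\<in>LI. F X ione = X"
      and G_hd: "\<forall>xs. length xs = n \<and> set xs \<subseteq> LI \<longrightarrow> G xs = hd xs"
    show ?thesis using m \<sigma> n F_X_range bspec[OF F_one X] G_hd by (rule sugeno_val_const_proj)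
  next
    assume F_one: "\<forall>X\<in>LI. F X ione = X"
      and F_mono: "\<forall>X\<in>LI. \<forall>Y\<in>LI. \<forall>Z\<in>LI. le Y Z \<longrightarrow> le (F X Y) (F X Z)"
      and G_max: "\<forall>xs. length xs = n \<and> set xs \<subseteq> LI \<longrightarrow> G xs = lmax le xs"
    show ?thesis
      using m \<sigma> n antisym F_X_range bspec[OF F_one X] bspec[OF F_mono X] G_max
      by (rule sugeno_val_const_max)
  next
    assume G_idem: "\<forall>X\<in>LI. G (replicate n X) = X" and F_fst: "\<forall>X\<in>LI. \<forall>Y\<in>LI. F X Y = X"
    show ?thesis using m \<sigma> bspec[OF F_fst X] bspec[OF G_idem X] by (rule sugeno_val_const_idem)
  qed
  note sorted_iff = sorting_perm_const_iff[of le X, OF refl]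
  have "sugeno le n m F G (\<lambda>_. X) = X"
    by (rule sugeno_eqI[where \<sigma>\<^sub>0 = id]) (simp_all add: sorted_iff val permutes_id)
  then show "sugeno le n m F G (\<lambda>_. X) = X \<and>
              (\<forall>\<sigma>. sorting_perm le n (\<lambda>_. X) \<sigma> \<longrightarrow> sugeno_val n m F G (\<lambda>_. X) \<sigma> = X)"
    by (simp add: sorted_iff val)
qed

end
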